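(* Let $G$ be an instance and $b>1$, and let $R$ be the minimal reward placed at $t$ required to motivate the sophisticated agent (with abandonment) with present-bias parameter $b$ to reach $t$ from $s$. Then $R\le b\cdot C_o(s)$.
   Context: An instance is a finite directed acyclic graph $G=(V,E)$ with nonnegative edge costs $c(u,v)$, start node $s$ and target node $t$, where $t$ is the unique node with no outgoing edges; $C_o(u)$ is the minimum cost of a $u$–$t$ path. Sophisticated agent with bias $b$ and reward $R$ at $t$, which may abandon: process nodes in reverse topological order; $t$ is never abandoned and $C_R(t)=0$. For $u\neq t$, among out-edges $(u,v)$ with $v$ not abandoned let $P(u,v)=b\,c(u,v)+C_R(v)$; if none exists or all have $P(u,v)>R$, $u$ is abandoned; otherwise the agent at $u$ moves to $v^*(u)\in\arg\min P(u,v)$ and $C_R(u)=c(u,v^*(u))+C_R(v^*(u))$. The agent is motivated to reach $t$ (the graph is traversable for $R$) iff $s$ is not abandoned. *)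

theory Defs
  imports Main "HOL.Real"
begin

definition dag_instance :: "'a set \<Rightarrow> ('a \<times> 'a) set \<Rightarrow> ('a \<Rightarrow> 'a \<Rightarrow> real) \<Rightarrow> 'a \<Rightarrow> 'a \<Rightarrow> bool" where
  "dag_instance V E c s t \<longleftrightarrow>
     finite V \<and> E \<subseteq> V \<times> V \<and> acyclic E \<and> s \<in> V \<and> t \<in> V \<and>
     (\<forall>(u,v)\<in>E. c u v \<ge> 0) \<and>
     (\<forall>v. (t,v) \<notin> E) \<and> (\<forall>u\<in>V. u \<noteq> t \<longrightarrow> (\<exists>v. (u,v) \<in> E))"

definition is_path :: "('a \<times> 'a) set \<Rightarrow> 'a \<Rightarrow> 'a list \<Rightarrow> 'a \<Rightarrow> bool" where
  "is_path E u xs v \<longleftrightarrow> xs \<noteq> [] \<and> hd xs = u \<and> last xs = v \<and>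
     (\<forall>i. i + 1 < length xs \<longrightarrow> (xs ! i, xs ! (i+1)) \<in> E)"

definition path_cost :: "('a \<Rightarrow> 'a \<Rightarrow> real) \<Rightarrow> 'a list \<Rightarrow> real" where
  "path_cost c xs = (\<Sum>i<length xs - 1. c (xs ! i) (xs ! (i+1)))"

definition C_o :: "('a \<times> 'a) set \<Rightarrow> ('a \<Rightarrow> 'a \<Rightarrow> real) \<Rightarrow> 'a \<Rightarrow> 'a \<Rightarrow> real" where
  "C_o E c t u = Min {path_cost c xs | xs. is_path E u xs t}"

text \<open>A valid run of the sophisticated agent with bias b and reward R (which may abandon):
  ab u = u is abandoned, CR u = C_R(u), nxt u = v*(u). These local conditions, processed
  in reverse topological order, are exactly the procedure of the paper; the only freedom
  left is the tie-breaking in the argmin.\<close>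
definition soph_run :: "'a set \<Rightarrow> ('a \<times> 'a) set \<Rightarrow> ('a \<Rightarrow> 'a \<Rightarrow> real) \<Rightarrow> 'a \<Rightarrow> real \<Rightarrow> real \<Rightarrow>
    ('a \<Rightarrow> bool) \<Rightarrow> ('a \<Rightarrow> real) \<Rightarrow> ('a \<Rightarrow> 'a) \<Rightarrow> bool" where
  "soph_run V E c t b R ab CR nxt \<longleftrightarrow>
     \<not> ab t \<and> CR t = 0 \<and>
     (\<forall>u \<in> V - {t}.
        (let S = {v. (u,v) \<in> E \<and> \<not> ab v}; P = (\<lambda>v. b * c u v + CR v) in
          (ab u \<longleftrightarrow> (\<forall>v\<in>S. P v > R)) \<and>
          (\<not> ab u \<longrightarrow> nxt u \<in> S \<and> (\<forall>v\<in>S. P (nxt u) \<le> P v) \<and>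
                       CR u = c u (nxt u) + CR (nxt u))))"

text \<open>Minimal reward motivating the agent to reach t from s, where for every reward R
  the agent's run (with arbitrary tie-breaking) is given by ab R, CR R, nxt R.\<close>
definition min_reward :: "(real \<Rightarrow> 'a \<Rightarrow> bool) \<Rightarrow> 'a \<Rightarrow> real" where
  "min_reward ab s = Inf {R. R \<ge> 0 \<and> \<not> ab R s}"

end

theory Submission
  imports Defs
begin

text \<open>Let \<open>u\<close> be a vertex with \<open>b \<cdot> C_o(u) \<le> R\<close>. Following the first edge \<open>(u,w)\<close> of an
  optimal \<open>u\<close>-\<open>t\<close> path gives \<open>b \<cdot> C_o(w) \<le> b \<cdot> C_o(u) \<le> R\<close>, so by induction in reverse
  topological order \<open>w\<close> is not abandoned and \<open>C_R(w) \<le> b \<cdot> C_o(w)\<close>. Hence the perceived cost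
  of moving to \<open>w\<close> is \<open>b \<cdot> c(u,w) + C_R(w) \<le> b \<cdot> C_o(u) \<le> R\<close>, so \<open>u\<close> is not abandoned either,
  and since \<open>b \<ge> 1\<close> its actual cost \<open>C_R(u)\<close> is at most the perceived cost of its chosen move,
  which is at most \<open>b \<cdot> C_o(u)\<close>. Taking \<open>u = s\<close> and \<open>R = b \<cdot> C_o(s)\<close> proves the bound.\<close>

lemma dag_instance_wf_converse:
  assumes "dag_instance V E c s t"
  shows "wf (E\<inverse>)"
proof -
  have "finite E"
    using assms finite_subset[of E "V \<times> V"] unfolding dag_instance_def by auto
  then show ?thesis
    using assms unfolding dag_instance_def by (simp add: finite_acyclic_wf)
qed

lemma is_path_singleton [simp]: "is_path E u [x] v \<longleftrightarrow> x = u \<and> u = v"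
  by (auto simp: is_path_def)

lemma is_path_Cons_iff:
  assumes "ys \<noteq> []"
  shows "is_path E u (x # ys) v \<longleftrightarrow> x = u \<and> (u, hd ys) \<in> E \<and> is_path E (hd ys) ys v"
proof -
  have "(\<forall>i. i + 1 < length (x # ys) \<longrightarrow> ((x # ys) ! i, (x # ys) ! (i + 1)) \<in> E) \<longleftrightarrow>
        (x, hd ys) \<in> E \<and> (\<forall>i. i + 1 < length ys \<longrightarrow> (ys ! i, ys ! (i + 1)) \<in> E)"
    using assms by (auto simp: nth_Cons hd_conv_nth split: nat.splits)
  then show ?thesis
    using assms unfolding is_path_def by auto
qed

lemma is_path_trancl:
  assumes "is_path E u xs v" "i < j" "j < length xs"
  shows "(xs ! i, xs ! j) \<in> E\<^sup>+"
  using assms(2,3)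
proof (induction j)
  case 0
  then show ?case by simp
next
  case (Suc j)
  have "(xs ! j, xs ! Suc j) \<in> E"
    using assms(1) Suc.prems unfolding is_path_def by auto
  with Suc show ?case
    by (cases "i = j") (auto intro: trancl_into_trancl)
qed

lemma is_path_distinct:
  assumes "acyclic E" "is_path E u xs v"
  shows "distinct xs"
proof -
  have "xs ! i \<noteq> xs ! j" if "i < j" "j < length xs" for i j
    using is_path_trancl[OF assms(2) that] assms(1) unfolding acyclic_def by auto
  then show ?thesis
    unfolding distinct_conv_nth by (metis nat_neq_iff)
qed

lemma is_path_subset:
  assumes "E \<subseteq> V \<times> V" "u \<in> V" "is_path E u xs v"
  shows "set xs \<subseteq> V"
proof
  fix x assume "x \<in> set xs"
  then obtain k where k: "k < length xs" "x = xs ! k"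
    by (auto simp: in_set_conv_nth)
  show "x \<in> V"
  proof (cases k)
    case 0
    then show ?thesis using assms k by (auto simp: is_path_def hd_conv_nth)
  next
    case (Suc m)
    then have "(xs ! m, xs ! k) \<in> E"
      using assms(3) k unfolding is_path_def by auto
    then show ?thesis using assms(1) k by auto
  qed
qed

lemma path_cost_Cons:
  assumes "ys \<noteq> []"
  shows "path_cost c (u # ys) = c u (hd ys) + path_cost c ys"
proof -
  obtain n where "length ys = Suc n"
    using assms by (cases ys) auto
  then show ?thesis
    using assms by (simp add: path_cost_def sum.lessThan_Suc_shift hd_conv_nth del: sum.lessThan_Suc)
qed

lemma path_cost_nonneg:
  assumes "\<forall>(x, y)\<in>E. c x y \<ge> 0" "is_path E u xs v"
  shows "path_cost c xs \<ge> 0"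
  unfolding path_cost_def
proof (rule sum_nonneg)
  fix i assume "i \<in> {..<length xs - 1}"
  then have "(xs ! i, xs ! (i + 1)) \<in> E"
    using assms(2) unfolding is_path_def by auto
  then show "c (xs ! i) (xs ! (i + 1)) \<ge> 0"
    using assms(1) by auto
qed

lemma finite_path_costs:
  assumes "dag_instance V E c s t" "u \<in> V"
  shows "finite {path_cost c xs | xs. is_path E u xs t}"
proof -
  have "{xs. is_path E u xs t} \<subseteq> {xs. set xs \<subseteq> V \<and> distinct xs}"
  proof (rule subsetI, simp only: mem_Collect_eq)
    fix xs assume "is_path E u xs t"
    then show "set xs \<subseteq> V \<and> distinct xs"
      using assms is_path_subset[of E V u xs t] is_path_distinct[of E u xs t]
      unfolding dag_instance_def by auto
  qed
  moreover have "finite {xs. set xs \<subseteq> V \<and> distinct xs}"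
    using assms(1) finite_subset_distinct unfolding dag_instance_def by blast
  ultimately have "finite {xs. is_path E u xs t}"
    by (rule finite_subset)
  then show ?thesis
    by (simp add: setcompr_eq_image)
qed

lemma path_to_target_exists:
  assumes "dag_instance V E c s t" "u \<in> V"
  shows "\<exists>xs. is_path E u xs t"
  using assms(2)
proof (induction u rule: wf_induct_rule[OF dag_instance_wf_converse[OF assms(1)]])
  case (1 u)
  show ?case
  proof (cases "u = t")
    case True
    then show ?thesis by (intro exI[of _ "[t]"]) simp
  next
    case False
    then obtain v where v: "(u, v) \<in> E"
      using assms(1) 1 unfolding dag_instance_def by auto
    then have "v \<in> V"
      using assms(1) unfolding dag_instance_def by auto
    then obtain xs where "is_path E v xs t"
      using 1 v by auto
    then have "is_path E u (u # xs) t"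
      using v is_path_Cons_iff[of xs E u u t] by (auto simp: is_path_def)
    then show ?thesis by blast
  qed
qed

lemma C_o_attained:
  assumes "dag_instance V E c s t" "u \<in> V"
  shows "\<exists>xs. is_path E u xs t \<and> C_o E c t u = path_cost c xs"
proof -
  have "{path_cost c xs | xs. is_path E u xs t} \<noteq> {}"
    using path_to_target_exists[OF assms] by auto
  then have "C_o E c t u \<in> {path_cost c xs | xs. is_path E u xs t}"
    unfolding C_o_def using Min_in[OF finite_path_costs[OF assms]] by blast
  then show ?thesis by auto
qed

lemma C_o_nonneg:
  assumes "dag_instance V E c s t" "u \<in> V"
  shows "C_o E c t u \<ge> 0"
  using C_o_attained[OF assms] path_cost_nonneg assms(1) unfolding dag_instance_def by metis

lemma C_o_le_path_cost:
  assumes "dag_instance V E c s t" "u \<in> V" "is_path E u xs t"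
  shows "C_o E c t u \<le> path_cost c xs"
  unfolding C_o_def using finite_path_costs[OF assms(1,2)] assms(3)
  by (intro Min_le) auto

lemma C_o_optimal_successor:
  assumes "dag_instance V E c s t" "u \<in> V" "u \<noteq> t"
  obtains w where "(u, w) \<in> E" "c u w + C_o E c t w \<le> C_o E c t u"
proof -
  obtain xs where xs: "is_path E u xs t" "C_o E c t u = path_cost c xs"
    using C_o_attained[OF assms(1,2)] by blast
  define ys where "ys = tl xs"
  have ys: "xs = u # ys"
    using xs(1) unfolding is_path_def ys_def by (metis list.collapse)
  have "ys \<noteq> []"
    using xs(1) ys assms(3) by auto
  then have edge: "(u, hd ys) \<in> E" and tail: "is_path E (hd ys) ys t"
    using xs(1) ys is_path_Cons_iff[of ys E u u t] by simp_all
  have "hd ys \<in> V"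
    using edge assms(1) unfolding dag_instance_def by auto
  then have "c u (hd ys) + C_o E c t (hd ys) \<le> c u (hd ys) + path_cost c ys"
    using C_o_le_path_cost[OF assms(1) _ tail] by simp
  also have "\<dots> = C_o E c t u"
    using xs(2) ys path_cost_Cons[OF \<open>ys \<noteq> []\<close>] by simp
  finally show ?thesis
    using that edge by blast
qed

lemma soph_run_not_abandoned_if_cheap_successor:
  assumes inst: "dag_instance V E c s t" and b: "b \<ge> 1"
    and run: "soph_run V E c t b R ab CR nxt"
    and u: "u \<in> V" "u \<noteq> t"
    and w: "(u, w) \<in> E" "\<not> ab w" "b * c u w + CR w \<le> R"
  shows "\<not> ab u \<and> CR u \<le> b * c u w + CR w"
proof -
  define S where "S = {v. (u, v) \<in> E \<and> \<not> ab v}"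
  define P where "P = (\<lambda>v. b * c u v + CR v)"
  have loc: "(ab u \<longleftrightarrow> (\<forall>v\<in>S. P v > R)) \<and>
      (\<not> ab u \<longrightarrow> nxt u \<in> S \<and> (\<forall>v\<in>S. P (nxt u) \<le> P v) \<and>
                   CR u = c u (nxt u) + CR (nxt u))"
    using run u unfolding soph_run_def S_def P_def Let_def by auto
  have "w \<in> S" "P w \<le> R"
    using w unfolding S_def P_def by auto
  then have motivated: "\<not> ab u"
    using loc by force
  with loc \<open>w \<in> S\<close> have nxt: "nxt u \<in> S" "P (nxt u) \<le> P w" "CR u = c u (nxt u) + CR (nxt u)"
    by auto
  have "c u (nxt u) \<ge> 0"
    using inst nxt(1) unfolding dag_instance_def S_def by auto
  then have "c u (nxt u) \<le> b * c u (nxt u)"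
    using b mult_right_mono[of 1 b "c u (nxt u)"] by simp
  then have "CR u \<le> P w"
    using nxt(2,3) unfolding P_def by simp
  with motivated show ?thesis
    unfolding P_def by simp
qed

lemma soph_run_motivated_within_bias:
  assumes inst: "dag_instance V E c s t" and b: "b \<ge> 1"
    and run: "soph_run V E c t b R ab CR nxt"
    and "u \<in> V" "b * C_o E c t u \<le> R"
  shows "\<not> ab u \<and> CR u \<le> b * C_o E c t u"
  using assms(4,5)
proof (induction u rule: wf_induct_rule[OF dag_instance_wf_converse[OF inst]])
  case (1 u)
  show ?case
  proof (cases "u = t")
    case True
    then show ?thesis
      using run C_o_nonneg[OF inst 1(2)] b unfolding soph_run_def by simp
  next
    case False
    obtain w where w: "(u, w) \<in> E" "c u w + C_o E c t w \<le> C_o E c t u"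
      using C_o_optimal_successor[OF inst 1(2) False] by blast
    have "w \<in> V" and "c u w \<ge> 0"
      using w(1) inst unfolding dag_instance_def by auto
    then have "C_o E c t w \<le> C_o E c t u"
      using w(2) by simp
    then have "b * C_o E c t w \<le> b * C_o E c t u"
      using b by (simp add: mult_left_mono)
    with 1 w(1) \<open>w \<in> V\<close> have IH: "\<not> ab w \<and> CR w \<le> b * C_o E c t w"
      by auto
    have "b * c u w + b * C_o E c t w \<le> b * C_o E c t u"
      using w(2) b by (metis distrib_left mult_left_mono order.trans zero_le_one)
    then have perceived: "b * c u w + CR w \<le> b * C_o E c t u"
      using IH by simp
    then show ?thesis
      using soph_run_not_abandoned_if_cheap_successor[OF inst b run 1(2) False w(1)] IH 1(3)
      by fastforce
  qed
qed

theorem theorem2: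
  fixes V :: "'a set" and E :: "('a \<times> 'a) set" and c :: "'a \<Rightarrow> 'a \<Rightarrow> real"
    and s t :: 'a and b :: real
    and ab :: "real \<Rightarrow> 'a \<Rightarrow> bool" and CR :: "real \<Rightarrow> 'a \<Rightarrow> real" and nxt :: "real \<Rightarrow> 'a \<Rightarrow> 'a"
  assumes "dag_instance V E c s t"
    and "b > 1"
    and "\<forall>R. soph_run V E c t b R (ab R) (CR R) (nxt R)"
  shows "(\<exists>R \<ge> 0. \<not> ab R s) \<and> min_reward ab s \<le> b * C_o E c t s"
proof -
  define R0 where "R0 = b * C_o E c t s"
  have sV: "s \<in> V"
    using assms(1) unfolding dag_instance_def by auto
  have "R0 \<ge> 0"
    using C_o_nonneg[OF assms(1) sV] assms(2) unfolding R0_def by simp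
  moreover have "\<not> ab R0 s"
    using soph_run_motivated_within_bias[OF assms(1) _ spec[OF assms(3), of R0] sV] assms(2)
    unfolding R0_def by simp
  ultimately have "Inf {R. R \<ge> 0 \<and> \<not> ab R s} \<le> R0"
    by (intro cInf_lower bdd_belowI[of _ 0]) auto
  with \<open>R0 \<ge> 0\<close> \<open>\<not> ab R0 s\<close> show ?thesis
    unfolding min_reward_def R0_def by auto
qed

end
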